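(* Let $m\ge3$ and let $\{X_n\}$ be a sequence of finite connected $2$-connected graphs such that for each $n$ the number $N_n$ of maximal spanning trees of $X_n$ not containing a given edge is independent of the edge, and $\mathrm{girth}(X_n)\to\infty$. Let $\widetilde{X}_n$ be the $\mathbb{Z}_m$-homology cover of $X_n$. Let $d$ be the coarse disjoint union metric on $\bigsqcup_n\widetilde{X}_n$ restricting to the graph metric on each $\widetilde{X}_n$, and $d_Q$ the coarse disjoint union metric restricting to $d_{Q_n}$ on each $\widetilde{X}_n$. Then the identity map $(\bigsqcup_n\widetilde{X}_n,d)\to(\bigsqcup_n\widetilde{X}_n,d_Q)$ is a coarse equivalence, i.e. it and its inverse are coarse embeddings.
   Context: A graph is $2$-connected if removing any single edge leaves it connected; girth is the length of a shortest cycle. $\mathbb{Z}_m$-homology cover of a finite connected graph $X$: fix orientations of the edges; for a maximal spanning tree $T$ with complementary edges $e_1,\dots,e_r$ (a free basis of $\pi_1(X)$), let $\rho:\pi_1(X)\to K=\pi_1(X)/[\pi_1(X),\pi_1(X)]\pi_1(X)^m\cong\oplus^r\mathbb{Z}_m$; $\widetilde{X}$ has vertices $V(X)\times K$, edges $E(X)\times K$, where for $e$ from $v$ to $w$ the edge $(e,k)$ joins $(v,k)$ to $(w,k)$ if $e\in T$ and to $(w,\rho(e)k)$ if $e\notin T$. For a maximal tree $T$, clouds are the sets $V(X)\times\{k\}$; $C^T_x$ is the cloud containing $x$, identified with an element of $\oplus^r\mathbb{Z}_m$; $d_T$ is the word metric on $\oplus^r\mathbb{Z}_m$ with respect to $\rho(e_1),\dots,\rho(e_r)$.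 On $\widetilde{X}_n$, $d_{Q_n}(x,y)=\frac{1}{N_n}\sum_T d_T(C^T_x,C^T_y)$, summing over all maximal spanning trees $T$ of $X_n$. A coarse disjoint union metric restricts to the given metric on each component, with distances between distinct components larger than their diameters and tending to infinity. A coarse embedding is a map with non-decreasing $\rho_\pm\to\infty$ and $\rho_-(d(x,x'))\le d'(F(x),F(x'))\le\rho_+(d(x,x'))$. *)

theory Defs
  imports Main "HOL-Library.Extended_Nat"
begin

text \<open>A graph is given by a vertex set V, an edge set E and maps s, t giving
  the (fixed) orientation of each edge: edge e goes from s e to t e.
  Multiple edges and loops are allowed.\<close>

definition mg_wf :: "'v set \<Rightarrow> 'e set \<Rightarrow> ('e \<Rightarrow> 'v) \<Rightarrow> ('e \<Rightarrow> 'v) \<Rightarrow> bool" where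
  "mg_wf V E s t \<longleftrightarrow> finite V \<and> finite E \<and> (\<forall>e\<in>E. s e \<in> V \<and> t e \<in> V)"

definition mg_adj :: "'e set \<Rightarrow> ('e \<Rightarrow> 'v) \<Rightarrow> ('e \<Rightarrow> 'v) \<Rightarrow> 'v \<Rightarrow> 'v \<Rightarrow> bool" where
  "mg_adj E s t u w \<longleftrightarrow> (\<exists>e\<in>E. (s e = u \<and> t e = w) \<or> (s e = w \<and> t e = u))"

definition mg_connected :: "'v set \<Rightarrow> 'e set \<Rightarrow> ('e \<Rightarrow> 'v) \<Rightarrow> ('e \<Rightarrow> 'v) \<Rightarrow> bool" where
  "mg_connected V E s t \<longleftrightarrow> V \<noteq> {} \<and> (\<forall>u\<in>V. \<forall>w\<in>V. (mg_adj E s t)\<^sup>*\<^sup>* u w)"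

definition mg_2connected :: "'v set \<Rightarrow> 'e set \<Rightarrow> ('e \<Rightarrow> 'v) \<Rightarrow> ('e \<Rightarrow> 'v) \<Rightarrow> bool" where
  "mg_2connected V E s t \<longleftrightarrow> (\<forall>e\<in>E. mg_connected V (E - {e}) s t)"

definition mg_cycle :: "'e set \<Rightarrow> ('e \<Rightarrow> 'v) \<Rightarrow> ('e \<Rightarrow> 'v) \<Rightarrow> 'e list \<Rightarrow> 'v list \<Rightarrow> bool" where
  "mg_cycle E s t es vs \<longleftrightarrow> length es \<ge> 1 \<and> length vs = length es \<and>
     distinct es \<and> distinct vs \<and> set es \<subseteq> E \<and>
     (\<forall>i < length es. (s (es ! i) = vs ! i \<and> t (es ! i) = vs ! ((i + 1) mod length es)) \<or>
                      (t (es ! i) = vs ! i \<and> s (es ! i) = vs ! ((i + 1) mod length es)))"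

definition mg_girth :: "'e set \<Rightarrow> ('e \<Rightarrow> 'v) \<Rightarrow> ('e \<Rightarrow> 'v) \<Rightarrow> enat" where
  "mg_girth E s t = (INF es \<in> {es. \<exists>vs. mg_cycle E s t es vs}. enat (length es))"

definition mg_spanning_tree :: "'v set \<Rightarrow> 'e set \<Rightarrow> ('e \<Rightarrow> 'v) \<Rightarrow> ('e \<Rightarrow> 'v) \<Rightarrow> 'e set \<Rightarrow> bool" where
  "mg_spanning_tree V E s t T \<longleftrightarrow> T \<subseteq> E \<and> mg_connected V T s t \<and>
     \<not> (\<exists>es vs. mg_cycle T s t es vs)"

text \<open>Canonical model of the Z_m-homology cover: a vertex is a pair (v, c)
  where c is a Z_m-valued 1-chain (values in {0..<m}, supported on E) with
  boundary v - b, b a fixed base vertex.  (v,c) corresponds to the class of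
  walks from b to v with signed edge-count chain c mod m.  An edge e from v to w
  lifts to edges from (v,c) to (w, c + e).  For any maximal tree T with
  complementary edges e_1..e_r, the map (v,c) |-> (v, (c e_1, ..., c e_r)) is an
  isomorphism onto the cover built from T as in the paper, so the T-clouds are
  the fibres of c |-> c restricted to E - T.\<close>

definition hc_base :: "'v set \<Rightarrow> 'v" where
  "hc_base V = (SOME v. v \<in> V)"

definition hc_verts :: "nat \<Rightarrow> 'v set \<Rightarrow> 'e set \<Rightarrow> ('e \<Rightarrow> 'v) \<Rightarrow> ('e \<Rightarrow> 'v) \<Rightarrow> ('v \<times> ('e \<Rightarrow> int)) set" where
  "hc_verts m V E s t = {(v, c). v \<in> V \<and> (\<forall>e. c e \<in> {0..<int m}) \<and> (\<forall>e. e \<notin> E \<longrightarrow> c e = 0) \<and>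
     (\<forall>u\<in>V. ((\<Sum>e\<in>{e\<in>E. t e = u}. c e) - (\<Sum>e\<in>{e\<in>E. s e = u}. c e)) mod int m =
              ((if u = v then 1 else 0) - (if u = hc_base V then 1 else 0)) mod int m)}"

definition hc_adj :: "nat \<Rightarrow> 'v set \<Rightarrow> 'e set \<Rightarrow> ('e \<Rightarrow> 'v) \<Rightarrow> ('e \<Rightarrow> 'v) \<Rightarrow>
    ('v \<times> ('e \<Rightarrow> int)) \<Rightarrow> ('v \<times> ('e \<Rightarrow> int)) \<Rightarrow> bool" where
  "hc_adj m V E s t x y \<longleftrightarrow> x \<in> hc_verts m V E s t \<and> y \<in> hc_verts m V E s t \<and>
     (\<exists>e\<in>E. (s e = fst x \<and> t e = fst y \<and> snd y = (snd x)(e := (snd x e + 1) mod int m)) \<or>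
            (s e = fst y \<and> t e = fst x \<and> snd x = (snd y)(e := (snd y e + 1) mod int m)))"

definition graph_dist :: "('a \<Rightarrow> 'a \<Rightarrow> bool) \<Rightarrow> 'a \<Rightarrow> 'a \<Rightarrow> real" where
  "graph_dist R x y = real (LEAST k. (R ^^ k) x y)"

text \<open>Word metric on the group of functions I -> Z_m (direct sum of copies of
  Z_m indexed by I) with respect to the standard generators (unit vectors) and
  their inverses.\<close>
definition apply_letter :: "nat \<Rightarrow> 'e \<times> bool \<Rightarrow> ('e \<Rightarrow> int) \<Rightarrow> ('e \<Rightarrow> int)" where
  "apply_letter m l a = a(fst l := (a (fst l) + (if snd l then 1 else -1)) mod int m)"

definition word_dist :: "nat \<Rightarrow> 'e set \<Rightarrow> ('e \<Rightarrow> int) \<Rightarrow> ('e \<Rightarrow> int) \<Rightarrow> nat" where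
  "word_dist m I a a' = (LEAST k. \<exists>w. length w = k \<and> (\<forall>l\<in>set w. fst l \<in> I) \<and> fold (apply_letter m) w a = a')"

text \<open>The cloud C^T_x of a cover vertex x = (v,c), as an element of the direct
  sum of copies of Z_m indexed by the complementary edges E - T.\<close>
definition cloud :: "'e set \<Rightarrow> 'e set \<Rightarrow> ('v \<times> ('e \<Rightarrow> int)) \<Rightarrow> ('e \<Rightarrow> int)" where
  "cloud E T x = (\<lambda>e. if e \<in> E - T then snd x e else 0)"

definition dT :: "nat \<Rightarrow> 'e set \<Rightarrow> 'e set \<Rightarrow> ('v \<times> ('e \<Rightarrow> int)) \<Rightarrow> ('v \<times> ('e \<Rightarrow> int)) \<Rightarrow> nat" where
  "dT m E T x y = word_dist m (E - T) (cloud E T x) (cloud E T y)"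

definition dQ :: "nat \<Rightarrow> nat \<Rightarrow> 'v set \<Rightarrow> 'e set \<Rightarrow> ('e \<Rightarrow> 'v) \<Rightarrow> ('e \<Rightarrow> 'v) \<Rightarrow>
    ('v \<times> ('e \<Rightarrow> int)) \<Rightarrow> ('v \<times> ('e \<Rightarrow> int)) \<Rightarrow> real" where
  "dQ m N V E s t x y = (1 / real N) * (\<Sum>T\<in>{T. mg_spanning_tree V E s t T}. real (dT m E T x y))"

definition metric_on :: "'a set \<Rightarrow> ('a \<Rightarrow> 'a \<Rightarrow> real) \<Rightarrow> bool" where
  "metric_on S d \<longleftrightarrow> (\<forall>x\<in>S. \<forall>y\<in>S. 0 \<le> d x y \<and> d x y = d y x \<and> (d x y = 0 \<longleftrightarrow> x = y)) \<and>
     (\<forall>x\<in>S. \<forall>y\<in>S. \<forall>z\<in>S. d x z \<le> d x y + d y z)"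

definition disj_union :: "(nat \<Rightarrow> 'a set) \<Rightarrow> (nat \<times> 'a) set" where
  "disj_union X = (SIGMA n:UNIV. X n)"

definition coarse_disj_union_metric ::
    "(nat \<Rightarrow> 'a set) \<Rightarrow> (nat \<Rightarrow> 'a \<Rightarrow> 'a \<Rightarrow> real) \<Rightarrow> (nat \<times> 'a \<Rightarrow> nat \<times> 'a \<Rightarrow> real) \<Rightarrow> bool" where
  "coarse_disj_union_metric X dn d \<longleftrightarrow>
     metric_on (disj_union X) d \<and>
     (\<forall>n. \<forall>x\<in>X n. \<forall>y\<in>X n. d (n, x) (n, y) = dn n x y) \<and>
     (\<forall>n n'. n \<noteq> n' \<longrightarrow> (\<forall>x\<in>X n. \<forall>y\<in>X n'.
        (\<forall>a\<in>X n. \<forall>b\<in>X n. dn n a b < d (n, x) (n', y)) \<and>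
        (\<forall>a\<in>X n'. \<forall>b\<in>X n'. dn n' a b < d (n, x) (n', y)))) \<and>
     (\<forall>R. \<exists>N. \<forall>n n'. n \<noteq> n' \<and> (N \<le> n \<or> N \<le> n') \<longrightarrow>
        (\<forall>x\<in>X n. \<forall>y\<in>X n'. R \<le> d (n, x) (n', y)))"

definition coarse_embedding :: "'a set \<Rightarrow> ('a \<Rightarrow> 'a \<Rightarrow> real) \<Rightarrow> ('b \<Rightarrow> 'b \<Rightarrow> real) \<Rightarrow> ('a \<Rightarrow> 'b) \<Rightarrow> bool" where
  "coarse_embedding S d d' F \<longleftrightarrow>
     (\<exists>rho_m rho_p :: real \<Rightarrow> real. mono rho_m \<and> mono rho_p \<and>
        filterlim rho_m at_top at_top \<and> filterlim rho_p at_top at_top \<and>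
        (\<forall>x\<in>S. \<forall>x'\<in>S. rho_m (d x x') \<le> d' (F x) (F x') \<and> d' (F x) (F x') \<le> rho_p (d x x')))"

end

(*
  Write a vertex of the cover as x = (v, c), with c a Z_m-chain of boundary v - b, and let S be
  the set of edges on which the chains of x and y differ. Crossing an edge e changes the T-cloud
  only for the N trees avoiding e, and by one generator, so d_Q is at most the graph distance.
  Conversely each edge of S is avoided by exactly N trees and costs each of them a generator,
  so |S| <= d_Q. If |S| is below the girth, S is a forest; a leaf of S can only sit at an
  endpoint, so crossing leaves one at a time walks from x to y in |S| steps. Hence on the n-th
  component the two metrics agree at scales below the girth, which tends to infinity. Finitely
  many finite components and the separation of distinct components in both coarse disjoint
  union metrics then make bounded sets correspond, i.e. the identity is a coarse equivalence.
*)
theory Submission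
  imports Defs
begin

section \<open>Chains and the homology cover\<close>

definition chain_boundary :: "'e set \<Rightarrow> ('e \<Rightarrow> 'v) \<Rightarrow> ('e \<Rightarrow> 'v) \<Rightarrow> ('e \<Rightarrow> int) \<Rightarrow> 'v \<Rightarrow> int" where
  "chain_boundary E s t c u = (\<Sum>e\<in>{e\<in>E. t e = u}. c e) - (\<Sum>e\<in>{e\<in>E. s e = u}. c e)"

abbreviation chain_diff :: "'e set \<Rightarrow> ('e \<Rightarrow> int) \<Rightarrow> ('e \<Rightarrow> int) \<Rightarrow> 'e set" where
  "chain_diff E c c' \<equiv> {e\<in>E. c e \<noteq> c' e}"

lemma hc_verts_iff:
  "(v, c) \<in> hc_verts m V E s t \<longleftrightarrow> v \<in> V \<and> (\<forall>e. c e \<in> {0..<int m}) \<and> (\<forall>e. e \<notin> E \<longrightarrow> c e = 0) \<and>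
     (\<forall>u\<in>V. chain_boundary E s t c u mod int m =
        ((if u = v then 1 else 0) - (if u = hc_base V then 1 else 0)) mod int m)"
  unfolding hc_verts_def chain_boundary_def by simp

lemma finite_hc_verts:
  assumes "mg_wf V E s t"
  shows "finite (hc_verts m V E s t)"
proof -
  let ?C = "{c. \<forall>e. (e \<in> E \<longrightarrow> c e \<in> {0..<int m}) \<and> (e \<notin> E \<longrightarrow> c e = 0)}"
  have "finite E" "finite V" using assms unfolding mg_wf_def by auto
  have "finite ?C" by (rule finite_set_of_finite_funs[OF \<open>finite E\<close>]) simp
  then have "finite (V \<times> ?C)" using \<open>finite V\<close> by simp
  moreover have "hc_verts m V E s t \<subseteq> V \<times> ?C" unfolding hc_verts_def by auto
  ultimately show ?thesis by (rule finite_subset[rotated])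
qed

lemma sum_fun_upd:
  fixes c :: "'e \<Rightarrow> 'a::ab_group_add"
  assumes "finite A"
  shows "(\<Sum>e\<in>A. (c(e0 := x)) e) = (\<Sum>e\<in>A. c e) + (if e0 \<in> A then x - c e0 else 0)"
proof -
  have "(\<Sum>e\<in>A. (c(e0 := x)) e) = (\<Sum>e\<in>A. c e + (if e = e0 then x - c e0 else 0))"
    by (rule sum.cong) auto
  also have "\<dots> = (\<Sum>e\<in>A. c e) + (if e0 \<in> A then x - c e0 else 0)"
    using assms by (simp add: sum.distrib sum.delta')
  finally show ?thesis .
qed

lemma chain_boundary_fun_upd:
  assumes "finite E" "e0 \<in> E"
  shows "chain_boundary E s t (c(e0 := x)) u =
    chain_boundary E s t c u + (x - c e0) * ((if t e0 = u then 1 else 0) - (if s e0 = u then 1 else 0))"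
proof -
  have fin: "finite {e\<in>E. t e = u}" "finite {e\<in>E. s e = u}" using assms(1) by auto
  show ?thesis using assms
    unfolding chain_boundary_def sum_fun_upd[OF fin(1)] sum_fun_upd[OF fin(2)] by (simp add: algebra_simps)
qed

lemma chain_boundary_diff_mod:
  assumes "(v, c) \<in> hc_verts m V E s t" "(w, c') \<in> hc_verts m V E s t" "z \<in> V"
  shows "(chain_boundary E s t c' z - chain_boundary E s t c z) mod int m =
    ((if z = w then 1 else 0) - (if z = v then 1 else 0)) mod int m"
proof -
  let ?b = "if z = hc_base V then 1 else 0"
  have "chain_boundary E s t c' z mod int m = ((if z = w then 1 else 0) - ?b) mod int m"
    "chain_boundary E s t c z mod int m = ((if z = v then 1 else 0) - ?b) mod int m"
    using assms unfolding hc_verts_iff by auto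
  from mod_diff_cong[OF this] show ?thesis by simp
qed

text \<open>Hypothesis moved says that adding k times the boundary of e0 to the point u gives the
  point u' modulo m.\<close>
lemma hc_verts_update:
  assumes x: "(u, c) \<in> hc_verts m V E s t" and wf: "mg_wf V E s t" and e0: "e0 \<in> E" and "m > 0"
    and range: "y \<in> {0..<int m}" and k: "(y - c e0) mod int m = k mod int m" and u': "u' \<in> V"
    and moved: "\<And>z. z \<in> V \<Longrightarrow>
      ((if z = u then 1 else 0) + k * ((if t e0 = z then 1 else 0) - (if s e0 = z then 1 else 0))) mod int m =
      (if z = u' then 1 else 0) mod int m"
  shows "(u', c(e0 := y)) \<in> hc_verts m V E s t"
  unfolding hc_verts_iff
proof (intro conjI ballI allI impI)
  have fE: "finite E" using wf unfolding mg_wf_def by auto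
  note H = x[unfolded hc_verts_iff]
  show "u' \<in> V" by fact
  show "(c(e0 := y)) e \<in> {0..<int m}" for e using H range by auto
  show "(c(e0 := y)) e = 0" if "e \<notin> E" for e using H e0 that by auto
  fix z assume z: "z \<in> V"
  let ?a = "(if t e0 = z then 1 else 0) - (if s e0 = z then (1::int) else 0)"
  let ?b = "if z = hc_base V then 1 else (0::int)"
  have "chain_boundary E s t (c(e0 := y)) z mod int m = (chain_boundary E s t c z + (y - c e0) * ?a) mod int m"
    by (simp only: chain_boundary_fun_upd[OF fE e0])
  also have "\<dots> = (((if z = u then 1 else 0) - ?b) + k * ?a) mod int m"
    using H z by (intro mod_add_cong mod_mult_cong k) auto
  also have "\<dots> = (((if z = u then 1 else 0) + k * ?a) - ?b) mod int m"
    by (simp add: algebra_simps)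
  also have "\<dots> = ((if z = u' then 1 else 0) - ?b) mod int m"
    using moved[OF z] by (rule mod_diff_cong) simp
  finally show "chain_boundary E s t (c(e0 := y)) z mod int m = ((if z = u' then 1 else 0) - ?b) mod int m" .
qed

lemma hc_adj_forward:
  assumes x: "(u, c) \<in> hc_verts m V E s t" and wf: "mg_wf V E s t" and e: "e \<in> E" and "m > 0"
    and "s e = u"
  shows "hc_adj m V E s t (u, c) (t e, c(e := (c e + 1) mod int m))"
proof -
  have "(t e, c(e := (c e + 1) mod int m)) \<in> hc_verts m V E s t"
  proof (rule hc_verts_update[OF x wf e \<open>m > 0\<close>, where k = 1])
    show "t e \<in> V" using wf e unfolding mg_wf_def by auto
  qed (use assms in \<open>auto simp: mod_diff_left_eq\<close>)
  then show ?thesis unfolding hc_adj_def using x e \<open>s e = u\<close> by auto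
qed

lemma hc_adj_backward:
  assumes x: "(u, c) \<in> hc_verts m V E s t" and wf: "mg_wf V E s t" and e: "e \<in> E" and "m > 0"
    and "t e = u"
  shows "hc_adj m V E s t (u, c) (s e, c(e := (c e - 1) mod int m))"
proof -
  let ?c = "c(e := (c e - 1) mod int m)"
  have y: "(s e, ?c) \<in> hc_verts m V E s t"
  proof (rule hc_verts_update[OF x wf e \<open>m > 0\<close>, where k = "-1"])
    show "s e \<in> V" using wf e unfolding mg_wf_def by auto
  qed (use assms in \<open>auto simp: mod_diff_left_eq\<close>)
  have "(?c e + 1) mod int m = (c e - 1 + 1) mod int m" by (simp add: mod_add_left_eq)
  also have "\<dots> = c e" using x unfolding hc_verts_iff by simp
  finally have "c = ?c(e := (?c e + 1) mod int m)" by (auto intro!: ext)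
  then show ?thesis unfolding hc_adj_def using x y e \<open>t e = u\<close> by auto
qed

section \<open>Leaves of finite forests\<close>

lemma last_eq_nth_length: "length vs = Suc n \<Longrightarrow> last vs = vs ! n"
  by (metis last_conv_nth diff_Suc_1 length_0_conv nat.distinct(1))

definition simple_path :: "'e set \<Rightarrow> ('e \<Rightarrow> 'v) \<Rightarrow> ('e \<Rightarrow> 'v) \<Rightarrow> 'e list \<Rightarrow> 'v list \<Rightarrow> bool" where
  "simple_path S s t es vs \<longleftrightarrow> length vs = Suc (length es) \<and> distinct es \<and> distinct vs \<and> set es \<subseteq> S \<and>
     (\<forall>i<length es. (s (es!i) = vs!i \<and> t (es!i) = vs!Suc i) \<or> (t (es!i) = vs!i \<and> s (es!i) = vs!Suc i))"

definition leaf_edge :: "'e set \<Rightarrow> ('e \<Rightarrow> 'v) \<Rightarrow> ('e \<Rightarrow> 'v) \<Rightarrow> 'v \<Rightarrow> 'e \<Rightarrow> bool" where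
  "leaf_edge S s t z e0 \<longleftrightarrow> e0 \<in> S \<and> (s e0 = z \<or> t e0 = z) \<and> s e0 \<noteq> t e0 \<and>
     (\<forall>e\<in>S. (s e = z \<or> t e = z) \<longrightarrow> e = e0)"

lemma mg_cycle_mono: "mg_cycle S s t es vs \<Longrightarrow> S \<subseteq> S' \<Longrightarrow> mg_cycle S' s t es vs"
  unfolding mg_cycle_def by auto

lemma simple_path_rev:
  assumes "simple_path S s t es vs"
  shows "simple_path S s t (rev es) (rev vs)"
proof -
  let ?L = "length es"
  have len: "length vs = Suc ?L" using assms unfolding simple_path_def by auto
  have "(s (rev es!i) = rev vs!i \<and> t (rev es!i) = rev vs!Suc i) \<or>
        (t (rev es!i) = rev vs!i \<and> s (rev es!i) = rev vs!Suc i)" if i: "i < ?L" for i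
  proof -
    have "?L - Suc i < ?L" using i by auto
    then have "(s (es!(?L - Suc i)) = vs!(?L - Suc i) \<and> t (es!(?L - Suc i)) = vs!Suc (?L - Suc i)) \<or>
          (t (es!(?L - Suc i)) = vs!(?L - Suc i) \<and> s (es!(?L - Suc i)) = vs!Suc (?L - Suc i))"
      using assms unfolding simple_path_def by blast
    moreover have "rev es ! i = es!(?L - Suc i)" "rev vs ! i = vs!Suc (?L - Suc i)"
      "rev vs ! Suc i = vs!(?L - Suc i)"
      using i len by (simp_all add: rev_nth Suc_diff_Suc)
    ultimately show ?thesis by auto
  qed
  then show ?thesis using assms unfolding simple_path_def by auto
qed

lemma simple_path_snoc:
  assumes p: "simple_path S s t es vs" and e: "e \<in> S" "e \<notin> set es" and z: "z \<notin> set vs"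
    and joins: "(s e = last vs \<and> t e = z) \<or> (t e = last vs \<and> s e = z)"
  shows "simple_path S s t (es @ [e]) (vs @ [z])"
proof -
  have len: "length vs = Suc (length es)" using p unfolding simple_path_def by simp
  then have "last vs = vs ! length es" by (rule last_eq_nth_length)
  then show ?thesis using p e z joins len unfolding simple_path_def
    by (auto simp: nth_append less_Suc_eq)
qed

lemma simple_path_close_cycle:
  assumes p: "simple_path S s t es vs" and e: "e \<in> S" "e \<notin> set es" and j: "j < length vs"
    and joins: "(s e = last vs \<and> t e = vs ! j) \<or> (t e = last vs \<and> s e = vs ! j)"
  shows "mg_cycle S s t (drop j es @ [e]) (drop j vs)"
  unfolding mg_cycle_def
proof (intro conjI allI impI)
  let ?L = "length es" and ?es = "drop j es @ [e]"
  have len: "length vs = Suc ?L" and adj: "\<And>i. i < ?L \<Longrightarrow>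
      (s (es!i) = vs!i \<and> t (es!i) = vs!Suc i) \<or> (t (es!i) = vs!i \<and> s (es!i) = vs!Suc i)"
    using p unfolding simple_path_def by auto
  have last: "last vs = vs ! ?L" using len by (rule last_eq_nth_length)
  have ll: "length ?es = Suc (?L - j)" using j len by simp
  show "1 \<le> length ?es" "length (drop j vs) = length ?es" using j len by simp_all
  show "distinct ?es" "distinct (drop j vs)" "set ?es \<subseteq> S"
    using p e unfolding simple_path_def by (auto dest: in_set_dropD)
  fix i assume i: "i < length ?es"
  show "s (?es ! i) = drop j vs ! i \<and> t (?es ! i) = drop j vs ! ((i + 1) mod length ?es) \<or>
        t (?es ! i) = drop j vs ! i \<and> s (?es ! i) = drop j vs ! ((i + 1) mod length ?es)"
  proof (cases "i < ?L - j")
    case True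
    then have "(i + 1) mod length ?es = Suc i" "j + i < ?L" using ll by simp_all
    then show ?thesis using adj[of "j + i"] True j len by (simp add: nth_append)
  next
    case False
    then have iL: "i = ?L - j" using i ll by simp
    then have "(i + 1) mod length ?es = 0" using ll by simp
    then show ?thesis using iL joins last j len by (simp add: nth_append)
  qed
qed

text \<open>Any other edge at the endpoint would prolong the path or close a cycle.\<close>
lemma longest_simple_path_leaf:
  assumes p: "simple_path S s t es vs" and ne: "es \<noteq> []"
    and longest: "\<And>es' vs'. simple_path S s t es' vs' \<Longrightarrow> length es' \<le> length es"
    and acyclic: "\<not> (\<exists>es vs. mg_cycle S s t es vs)"
  shows "leaf_edge S s t (last vs) (last es)"
proof -
  let ?L = "length es"
  have len: "length vs = Suc ?L" and dvs: "distinct vs" and sub: "set es \<subseteq> S"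
    and adj: "\<And>i. i < ?L \<Longrightarrow> (s (es!i) = vs!i \<and> t (es!i) = vs!Suc i) \<or> (t (es!i) = vs!i \<and> s (es!i) = vs!Suc i)"
    using p unfolding simple_path_def by auto
  have lastvs: "last vs = vs ! ?L" using len by (rule last_eq_nth_length)
  have lastes: "last es = es ! (?L - 1)" using ne by (simp add: last_conv_nth)
  have ladj: "(s (last es) = vs!(?L-1) \<and> t (last es) = vs!?L) \<or> (t (last es) = vs!(?L-1) \<and> s (last es) = vs!?L)"
    using adj[of "?L - 1"] ne lastes by auto
  have "?L - 1 \<noteq> ?L" using ne by (cases es) auto
  then have "vs!(?L-1) \<noteq> vs!?L" using dvs len by (simp add: nth_eq_iff_index_eq)
  then have loopfree: "s (last es) \<noteq> t (last es)" using ladj by metis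
  have only: "e = last es" if eS: "e \<in> S" and inc: "s e = last vs \<or> t e = last vs" for e
  proof (rule ccontr)
    assume ne2: "e \<noteq> last es"
    define z where "z = (if s e = last vs then t e else s e)"
    have joins: "(s e = last vs \<and> t e = z) \<or> (t e = last vs \<and> s e = z)" using inc z_def by auto
    have enot: "e \<notin> set es"
    proof
      assume "e \<in> set es"
      then obtain i where i: "i < ?L" "es!i = e" by (auto simp: in_set_conv_nth)
      then have "vs!?L = vs!i \<or> vs!?L = vs!Suc i" using adj[OF i(1)] joins lastvs by auto
      then have "i = ?L - 1" using dvs len i(1) by (auto simp: nth_eq_iff_index_eq)
      then show False using i(2) lastes ne2 by auto
    qed
    show False
    proof (cases "z \<in> set vs")
      case False
      from longest[OF simple_path_snoc[OF p eS enot False joins]] show False by simp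
    next
      case True
      then obtain j where j: "j < length vs" "vs!j = z" by (auto simp: in_set_conv_nth)
      have "mg_cycle S s t (drop j es @ [e]) (drop j vs)"
        by (rule simple_path_close_cycle[OF p eS enot j(1)]) (use joins j(2) in simp)
      with acyclic show False by blast
    qed
  qed
  have "s (last es) = last vs \<or> t (last es) = last vs" using ladj unfolding lastvs by blast
  then show ?thesis unfolding leaf_edge_def using sub ne loopfree only by auto
qed

lemma acyclic_two_leaves:
  assumes fin: "finite S" and ne: "S \<noteq> {}" and acyclic: "\<not> (\<exists>es vs. mg_cycle S s t es vs)"
  obtains z1 z2 e1 e2 where "z1 \<noteq> z2" "leaf_edge S s t z1 e1" "leaf_edge S s t z2 e2"
proof -
  obtain e where e: "e \<in> S" using ne by auto
  have "s e \<noteq> t e"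
  proof
    assume "s e = t e"
    then have "mg_cycle S s t [e] [s e]" using e unfolding mg_cycle_def by auto
    then show False using acyclic by blast
  qed
  then have p0: "simple_path S s t [e] [s e, t e]" using e unfolding simple_path_def by (auto simp: nth_Cons')
  let ?P = "\<lambda>k. \<exists>es vs. simple_path S s t es vs \<and> length es = k"
  have bound: "k \<le> card S" if "?P k" for k
    using that fin unfolding simple_path_def by (metis card_mono distinct_card)
  obtain k where k: "?P k" "\<And>k'. ?P k' \<Longrightarrow> k' \<le> k"
    using Nat.ex_has_greatest_nat[of ?P 1 "card S"] p0 bound by force
  then obtain es vs where p: "simple_path S s t es vs" "length es = k" by blast
  have ne': "es \<noteq> []" using k(2) p0 p(2) by force
  have longest: "length es' \<le> length es" if "simple_path S s t es' vs'" for es' vs'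
    using k(2) p(2) that by blast
  have "leaf_edge S s t (last vs) (last es)"
    by (rule longest_simple_path_leaf[OF p(1) ne' longest acyclic])
  moreover have "leaf_edge S s t (last (rev vs)) (last (rev es))"
    by (rule longest_simple_path_leaf[OF simple_path_rev[OF p(1)]]) (use ne' longest acyclic in auto)
  moreover have "last vs \<noteq> last (rev vs)"
  proof -
    have len: "length vs = Suc (length es)" "distinct vs" using p unfolding simple_path_def by auto
    moreover from this have "vs \<noteq> []" by auto
    ultimately have "last vs = vs ! length es" "last (rev vs) = vs ! 0"
      by (simp_all add: last_eq_nth_length last_rev hd_conv_nth)
    then show ?thesis using len ne' by (simp add: nth_eq_iff_index_eq)
  qed
  ultimately show ?thesis using that by blast
qed

section \<open>Walks in the cover\<close>

lemma mod_nonzero_if_abs_less: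
  fixes d :: int
  assumes "d \<noteq> 0" "\<bar>d\<bar> < int m"
  shows "d mod int m \<noteq> 0"
proof
  assume "d mod int m = 0"
  then have "int m dvd d" by (simp add: dvd_eq_mod_eq_0)
  then have "\<bar>int m\<bar> \<le> \<bar>d\<bar>" using assms(1) dvd_imp_le_int by blast
  then show False using assms(2) by simp
qed

lemma sum_single_support:
  assumes "finite A" "\<And>x. x \<in> A \<Longrightarrow> x \<noteq> a \<Longrightarrow> f x = 0"
  shows "sum f A = (if a \<in> A then f a else 0)"
proof -
  have "sum f A = (\<Sum>x\<in>A. if x = a then f a else 0)" using assms(2) by (intro sum.cong) auto
  then show ?thesis using assms(1) by (simp add: sum.delta')
qed

lemma chain_boundary_diff_at_leaf:
  assumes fE: "finite E" and leaf: "leaf_edge (chain_diff E c c') s t z e0"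
  shows "chain_boundary E s t c' z - chain_boundary E s t c z =
    (if t e0 = z then c' e0 - c e0 else 0) - (if s e0 = z then c' e0 - c e0 else 0)"
proof -
  have e0: "e0 \<in> E" using leaf unfolding leaf_edge_def by blast
  have other: "c' e - c e = 0" if "e \<in> E" "s e = z \<or> t e = z" "e \<noteq> e0" for e
  proof -
    have "e \<notin> chain_diff E c c'" using leaf that unfolding leaf_edge_def by blast
    then show ?thesis using that(1) by simp
  qed
  have "chain_boundary E s t c' z - chain_boundary E s t c z =
      (\<Sum>e\<in>{e\<in>E. t e = z}. c' e - c e) - (\<Sum>e\<in>{e\<in>E. s e = z}. c' e - c e)"
    unfolding chain_boundary_def by (simp add: sum_subtractf)
  also have "(\<Sum>e\<in>{e\<in>E. t e = z}. c' e - c e) = (if t e0 = z then c' e0 - c e0 else 0)"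
    by (subst sum_single_support[where a = e0]) (use fE e0 other in auto)
  also have "(\<Sum>e\<in>{e\<in>E. s e = z}. c' e - c e) = (if s e0 = z then c' e0 - c e0 else 0)"
    by (subst sum_single_support[where a = e0]) (use fE e0 other in auto)
  finally show ?thesis .
qed

text \<open>At a leaf z the boundary of c' - c is the nonzero residue of \<plusminus>(c' e0 - c e0), whereas
  it is the boundary of the point w minus that of v.\<close>
lemma chain_diff_leaf_at_endpoint:
  assumes x: "(v, c) \<in> hc_verts m V E s t" and y: "(w, c') \<in> hc_verts m V E s t"
    and wf: "mg_wf V E s t" and leaf: "leaf_edge (chain_diff E c c') s t z e0"
  shows "(z = v \<or> z = w) \<and> v \<noteq> w"
proof -
  have fE: "finite E" using wf unfolding mg_wf_def by auto
  have e0: "e0 \<in> E" "c e0 \<noteq> c' e0" "s e0 \<noteq> t e0" "s e0 = z \<or> t e0 = z"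
    using leaf unfolding leaf_edge_def by auto
  have zV: "z \<in> V" using e0 wf unfolding mg_wf_def by auto
  have "c e0 \<in> {0..<int m}" "c' e0 \<in> {0..<int m}" using x y unfolding hc_verts_iff by blast+
  then have d: "c' e0 - c e0 \<noteq> 0" "\<bar>c' e0 - c e0\<bar> < int m" using e0(2) by auto
  have "(c' e0 - c e0) mod int m \<noteq> 0" by (rule mod_nonzero_if_abs_less[OF d])
  moreover have "(- (c' e0 - c e0)) mod int m \<noteq> 0" by (rule mod_nonzero_if_abs_less) (use d in auto)
  ultimately have "(chain_boundary E s t c' z - chain_boundary E s t c z) mod int m \<noteq> 0"
    using chain_boundary_diff_at_leaf[OF fE leaf] e0(3,4) by auto
  then have "((if z = w then 1 else 0) - (if z = v then 1 else 0)) mod int m \<noteq> 0"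
    using chain_boundary_diff_mod[OF x y zV] by simp
  then show ?thesis by (auto split: if_splits)
qed

lemma hc_adj_across_leaf:
  assumes "m \<ge> 2" and x: "(v, c) \<in> hc_verts m V E s t" and y: "(w, c') \<in> hc_verts m V E s t"
    and wf: "mg_wf V E s t" and leaf: "leaf_edge (chain_diff E c c') s t v e0"
  obtains v' where "hc_adj m V E s t (v, c) (v', c(e0 := c' e0))"
proof -
  have fE: "finite E" using wf unfolding mg_wf_def by auto
  have m0: "m > 0" using \<open>m \<ge> 2\<close> by simp
  have e0: "e0 \<in> E" "s e0 \<noteq> t e0" "s e0 = v \<or> t e0 = v" using leaf unfolding leaf_edge_def by auto
  have range: "c e0 \<in> {0..<int m}" "c' e0 \<in> {0..<int m}" using x y unfolding hc_verts_iff by blast+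
  have "v \<noteq> w" using chain_diff_leaf_at_endpoint[OF x y wf leaf] by simp
  moreover have "v \<in> V" using x unfolding hc_verts_iff by simp
  ultimately have jump: "(chain_boundary E s t c' v - chain_boundary E s t c v) mod int m = (- 1) mod int m"
    using chain_boundary_diff_mod[OF x y] by simp
  show ?thesis
  proof (cases "s e0 = v")
    case True
    moreover have "t e0 \<noteq> v" using True e0(2) by simp
    ultimately have "(- (c' e0 - c e0)) mod int m = (- 1) mod int m"
      using jump chain_boundary_diff_at_leaf[OF fE leaf] by simp
    then have "(c' e0 - c e0) mod int m = 1 mod int m" by (metis minus_minus mod_minus_cong)
    then have "(c e0 + (c' e0 - c e0)) mod int m = (c e0 + 1) mod int m" by (metis mod_add_cong)
    then have "c' e0 = (c e0 + 1) mod int m" using range by simp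
    then show ?thesis using hc_adj_forward[OF x wf e0(1) m0 True] that by simp
  next
    case False
    then have tv: "t e0 = v" using e0 by auto
    then have "(c' e0 - c e0) mod int m = (- 1) mod int m"
      using jump chain_boundary_diff_at_leaf[OF fE leaf] False by simp
    then have "(c e0 + (c' e0 - c e0)) mod int m = (c e0 + - 1) mod int m" by (metis mod_add_cong)
    then have "c' e0 = (c e0 - 1) mod int m" using range by simp
    then show ?thesis using hc_adj_backward[OF x wf e0(1) m0 tv] that by simp
  qed
qed

text \<open>Crossing the leaf of the difference support at the current vertex shrinks the support by
  one edge.\<close>
lemma hc_relpowp_card_chain_diff:
  assumes m: "m \<ge> 2" and wf: "mg_wf V E s t" and y: "(w, c') \<in> hc_verts m V E s t"
  shows "(v, c) \<in> hc_verts m V E s t \<Longrightarrow> \<not> (\<exists>es vs. mg_cycle (chain_diff E c c') s t es vs) \<Longrightarrow>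
    (hc_adj m V E s t ^^ card (chain_diff E c c')) (v, c) (w, c')"
proof (induction "card (chain_diff E c c')" arbitrary: v c)
  case 0
  have fE: "finite E" using wf unfolding mg_wf_def by auto
  from 0 fE have "chain_diff E c c' = {}" by simp
  have cc: "c = c'"
  proof
    fix e
    show "c e = c' e"
      using \<open>chain_diff E c c' = {}\<close> 0(2) y unfolding hc_verts_iff by (cases "e \<in> E") auto
  qed
  have "v = w"
  proof (rule ccontr)
    assume "v \<noteq> w"
    moreover have "w \<in> V" using y unfolding hc_verts_iff by simp
    ultimately have "1 mod int m = 0" using chain_boundary_diff_mod[OF 0(2) y, of w] cc by simp
    then show False using m by simp
  qed
  then show ?case using cc 0(1) by simp
next
  case (Suc k)
  have fE: "finite E" using wf unfolding mg_wf_def by auto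
  let ?S = "chain_diff E c c'"
  have "finite ?S" using fE by simp
  moreover have "?S \<noteq> {}" using Suc.hyps(2) by (metis card.empty nat.distinct(1))
  ultimately obtain z1 z2 e1 e2 where z: "z1 \<noteq> z2" "leaf_edge ?S s t z1 e1" "leaf_edge ?S s t z2 e2"
    using acyclic_two_leaves[OF _ _ Suc.prems(2)] by blast
  moreover have "z1 = v \<or> z1 = w" "z2 = v \<or> z2 = w"
    using chain_diff_leaf_at_endpoint[OF Suc.prems(1) y wf] z(2,3) by blast+
  ultimately obtain e0 where leaf: "leaf_edge ?S s t v e0" by blast
  let ?c = "c(e0 := c' e0)"
  obtain v' where adj: "hc_adj m V E s t (v, c) (v', ?c)"
    using hc_adj_across_leaf[OF m Suc.prems(1) y wf leaf] .
  have e0: "e0 \<in> ?S" using leaf unfolding leaf_edge_def by blast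
  have S': "chain_diff E ?c c' = ?S - {e0}" by auto
  have k: "k = card (chain_diff E ?c c')" unfolding S' using Suc.hyps(2) e0 fE by simp
  have "(v', ?c) \<in> hc_verts m V E s t" using adj unfolding hc_adj_def by simp
  moreover have "\<not> (\<exists>es vs. mg_cycle (chain_diff E ?c c') s t es vs)"
    using Suc.prems(2) mg_cycle_mono[of _ s t _ _ ?S] unfolding S' by blast
  ultimately have "(hc_adj m V E s t ^^ k) (v', ?c) (w, c')" unfolding k by (rule Suc.hyps(1)[OF k])
  from relpowp_Suc_I2[OF adj this] show ?case using Suc.hyps(2) by simp
qed

lemma hc_lift_walk:
  assumes wf: "mg_wf V E s t" and "m > 0" and FE: "F \<subseteq> E"
  shows "(mg_adj F s t)\<^sup>*\<^sup>* u u' \<Longrightarrow> (u, c) \<in> hc_verts m V E s t \<Longrightarrow>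
    \<exists>c'. (u', c') \<in> hc_verts m V E s t \<and> (hc_adj m V E s t)\<^sup>*\<^sup>* (u, c) (u', c') \<and> (\<forall>e. e \<notin> F \<longrightarrow> c' e = c e)"
proof (induction rule: rtranclp_induct)
  case base
  then show ?case by blast
next
  case (step a a')
  then obtain c1 where c1: "(a, c1) \<in> hc_verts m V E s t" "(hc_adj m V E s t)\<^sup>*\<^sup>* (u, c) (a, c1)"
      "\<forall>e. e \<notin> F \<longrightarrow> c1 e = c e"
    by blast
  obtain e where e: "e \<in> F" "(s e = a \<and> t e = a') \<or> (s e = a' \<and> t e = a)"
    using step(2) unfolding mg_adj_def by blast
  then have eE: "e \<in> E" using FE by auto
  obtain c2 where adj: "hc_adj m V E s t (a, c1) (a', c2)" and "c2 = c1(e := c2 e)"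
  proof (cases "s e = a")
    case True
    then show ?thesis using that hc_adj_forward[OF c1(1) wf eE \<open>m > 0\<close>] e(2) by auto
  next
    case False
    then show ?thesis using that hc_adj_backward[OF c1(1) wf eE \<open>m > 0\<close>] e(2) by auto
  qed
  then have "\<forall>e'. e' \<notin> F \<longrightarrow> c2 e' = c e'" using c1(3) e(1) by (metis fun_upd_other)
  moreover have "(a', c2) \<in> hc_verts m V E s t" using adj unfolding hc_adj_def by simp
  ultimately show ?case using rtranclp.rtrancl_into_rtrancl[OF c1(2) adj] by blast
qed

definition chain_gap :: "nat \<Rightarrow> 'e set \<Rightarrow> ('e \<Rightarrow> int) \<Rightarrow> ('e \<Rightarrow> int) \<Rightarrow> nat" where
  "chain_gap m A c c' = (\<Sum>e\<in>A. nat ((c' e - c e) mod int m))"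

lemma chain_gap_fun_upd_less:
  assumes fin: "finite A" and e0: "e0 \<in> A" "c e0 \<noteq> c' e0" and agree: "\<forall>e\<in>A. c1 e = c e"
    and range: "c e0 \<in> {0..<int m}" "c' e0 \<in> {0..<int m}"
  shows "chain_gap m A (c1(e0 := (c1 e0 + 1) mod int m)) c' < chain_gap m A c c'"
proof -
  let ?c2 = "c1(e0 := (c1 e0 + 1) mod int m)"
  define r where "r = (c' e0 - c e0) mod int m"
  have "r \<noteq> 0" unfolding r_def by (rule mod_nonzero_if_abs_less) (use e0(2) range in auto)
  moreover have "0 \<le> r" "r < int m" unfolding r_def using range by simp_all
  ultimately have r: "1 \<le> r" "r < int m" by simp_all
  have "(c' e0 - ?c2 e0) mod int m = (c' e0 - (c e0 + 1)) mod int m"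
    using agree e0(1) by (simp add: mod_diff_right_eq)
  also have "\<dots> = (r - 1) mod int m" unfolding r_def by (simp add: mod_diff_left_eq algebra_simps)
  also have "\<dots> = r - 1" using r by simp
  finally have new: "nat ((c' e0 - ?c2 e0) mod int m) < nat ((c' e0 - c e0) mod int m)"
    using r unfolding r_def by simp
  have rest: "(\<Sum>e\<in>A - {e0}. nat ((c' e - ?c2 e) mod int m)) = (\<Sum>e\<in>A - {e0}. nat ((c' e - c e) mod int m))"
    using agree by (intro sum.cong) auto
  show ?thesis unfolding chain_gap_def sum.remove[OF fin e0(1)] rest using new by simp
qed

text \<open>Walk inside T to the tail of a non-tree edge on which the chains differ and cross it,
  decreasing the gap on the non-tree edges. When that gap is zero the difference support lies in
  the tree T.\<close>
lemma hc_connected: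
  assumes m: "m \<ge> 2" and wf: "mg_wf V E s t" and T: "mg_spanning_tree V E s t T"
    and x: "x \<in> hc_verts m V E s t" and y: "y \<in> hc_verts m V E s t"
  shows "(hc_adj m V E s t)\<^sup>*\<^sup>* x y"
proof -
  obtain w c' where yw: "y = (w, c')" by (cases y)
  have fE: "finite E" using wf unfolding mg_wf_def by auto
  have m0: "m > 0" using m by simp
  have TE: "T \<subseteq> E" and Tconn: "mg_connected V T s t" and Tacyclic: "\<not> (\<exists>es vs. mg_cycle T s t es vs)"
    using T unfolding mg_spanning_tree_def by auto
  have "(hc_adj m V E s t)\<^sup>*\<^sup>* (v, c) (w, c')" if "(v, c) \<in> hc_verts m V E s t" for v c
    using that
  proof (induction "chain_gap m (E - T) c c'" arbitrary: v c rule: less_induct)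
    case less
    note x = less.prems
    show ?case
    proof (cases "\<forall>e\<in>E - T. c e = c' e")
      case True
      then have "chain_diff E c c' \<subseteq> T" by auto
      then have "\<not> (\<exists>es vs. mg_cycle (chain_diff E c c') s t es vs)"
        using Tacyclic mg_cycle_mono by blast
      from hc_relpowp_card_chain_diff[OF m wf y[unfolded yw] x this] show ?thesis
        by (rule relpowp_imp_rtranclp)
    next
      case False
      then obtain e0 where e0: "e0 \<in> E - T" "c e0 \<noteq> c' e0" by auto
      have "v \<in> V" "s e0 \<in> V" using x wf e0 unfolding hc_verts_iff mg_wf_def by auto
      then have "(mg_adj T s t)\<^sup>*\<^sup>* v (s e0)" using Tconn unfolding mg_connected_def by auto
      from hc_lift_walk[OF wf m0 TE this x] obtain c1 where
        c1: "(s e0, c1) \<in> hc_verts m V E s t" "(hc_adj m V E s t)\<^sup>*\<^sup>* (v, c) (s e0, c1)"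
          "\<forall>e. e \<notin> T \<longrightarrow> c1 e = c e"
        by blast
      let ?c2 = "c1(e0 := (c1 e0 + 1) mod int m)"
      have adj: "hc_adj m V E s t (s e0, c1) (t e0, ?c2)"
        using hc_adj_forward[OF c1(1) wf _ m0 refl] e0(1) by simp
      have "chain_gap m (E - T) ?c2 c' < chain_gap m (E - T) c c'"
      proof (rule chain_gap_fun_upd_less)
        show "finite (E - T)" using fE by simp
        show "\<forall>e\<in>E - T. c1 e = c e" using c1(3) by simp
        show "c e0 \<in> {0..<int m}" using x unfolding hc_verts_iff by blast
        show "c' e0 \<in> {0..<int m}" using y unfolding yw hc_verts_iff by blast
      qed (use e0 in auto)
      moreover have "(t e0, ?c2) \<in> hc_verts m V E s t" using adj unfolding hc_adj_def by simp
      ultimately have "(hc_adj m V E s t)\<^sup>*\<^sup>* (t e0, ?c2) (w, c')" by (rule less.hyps)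
      with c1(2) adj show ?thesis by (meson rtranclp.rtrancl_into_rtrancl rtranclp_trans)
    qed
  qed
  then show ?thesis using x yw by (cases x) simp
qed

section \<open>Word metrics and the averaged metric\<close>

lemma fold_apply_letter_changes: "{e. fold (apply_letter m) w a e \<noteq> a e} \<subseteq> fst ` set w"
proof (induction w arbitrary: a)
  case Nil
  then show ?case by simp
next
  case (Cons l w)
  have "{e. apply_letter m l a e \<noteq> a e} \<subseteq> {fst l}" unfolding apply_letter_def by auto
  then show ?case using Cons.IH[of "apply_letter m l a"] by force
qed

lemma card_changes_le_length:
  assumes "fold (apply_letter m) w a = b"
  shows "card {e\<in>I. a e \<noteq> b e} \<le> length w"
proof -
  have "{e\<in>I. a e \<noteq> b e} \<subseteq> fst ` set w" using fold_apply_letter_changes[of m w a] assms by auto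
  then have "card {e\<in>I. a e \<noteq> b e} \<le> card (fst ` set w)" by (intro card_mono) auto
  also have "\<dots> \<le> length w" using card_image_le card_length le_trans by blast
  finally show ?thesis .
qed

lemma fold_replicate_apply_letter:
  assumes "m > 0"
  shows "a e \<in> {0..<int m} \<Longrightarrow>
    fold (apply_letter m) (replicate k (e, True)) a = a(e := (a e + int k) mod int m)"
proof (induction k arbitrary: a)
  case 0
  then show ?case by auto
next
  case (Suc k)
  let ?a = "a(e := (a e + 1) mod int m)"
  have "fold (apply_letter m) (replicate (Suc k) (e, True)) a = fold (apply_letter m) (replicate k (e, True)) ?a"
    by (simp add: apply_letter_def)
  also have "\<dots> = ?a(e := (?a e + int k) mod int m)" by (rule Suc.IH) (use assms in simp)
  also have "\<dots> = a(e := (a e + int (Suc k)) mod int m)" by (simp add: mod_add_left_eq add.assoc)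
  finally show ?case .
qed

lemma exists_word:
  assumes "m > 0"
  shows "finite I \<Longrightarrow> \<forall>e. e \<notin> I \<longrightarrow> a e = b e \<Longrightarrow> \<forall>e\<in>I. a e \<in> {0..<int m} \<and> b e \<in> {0..<int m} \<Longrightarrow>
    \<exists>w. (\<forall>l\<in>set w. fst l \<in> I) \<and> fold (apply_letter m) w a = b"
proof (induction I arbitrary: a rule: finite_induct)
  case empty
  then have "a = b" by auto
  then show ?case by (intro exI[of _ "[]"]) simp
next
  case (insert e I)
  define k where "k = nat ((b e - a e) mod int m)"
  have range: "a e \<in> {0..<int m}" "b e \<in> {0..<int m}" using insert.prems by auto
  have "(a e + int k) mod int m = (a e + (b e - a e)) mod int m"
    unfolding k_def using assms by (simp add: mod_add_right_eq)
  then have "fold (apply_letter m) (replicate k (e, True)) a = a(e := b e)"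
    using fold_replicate_apply_letter[OF assms, where a = a and e = e and k = k] range by simp
  moreover have "\<exists>w. (\<forall>l\<in>set w. fst l \<in> I) \<and> fold (apply_letter m) w (a(e := b e)) = b"
    by (rule insert.IH) (use insert.prems insert.hyps(2) in auto)
  then obtain w where "\<forall>l\<in>set w. fst l \<in> I" "fold (apply_letter m) w (a(e := b e)) = b"
    by blast
  ultimately show ?case by (intro exI[of _ "replicate k (e, True) @ w"]) auto
qed

lemma word_dist_ge_card_changes:
  assumes "m > 0" and "finite I" and "\<forall>e. e \<notin> I \<longrightarrow> a e = b e"
    and "\<forall>e\<in>I. a e \<in> {0..<int m} \<and> b e \<in> {0..<int m}"
  shows "card {e\<in>I. a e \<noteq> b e} \<le> word_dist m I a b"
  unfolding word_dist_def
proof (rule LeastI2_ex)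
  show "\<exists>k w. length w = k \<and> (\<forall>l\<in>set w. fst l \<in> I) \<and> fold (apply_letter m) w a = b"
    using exists_word[OF assms] by blast
qed (use card_changes_le_length in blast)

lemma word_dist_le_length:
  assumes "\<forall>l\<in>set w. fst l \<in> I" "fold (apply_letter m) w a = b"
  shows "word_dist m I a b \<le> length w"
  unfolding word_dist_def by (rule Least_le) (use assms in blast)

lemma finite_spanning_trees:
  assumes "finite E"
  shows "finite {T. mg_spanning_tree V E s t T}"
  by (rule finite_subset[of _ "Pow E"]) (use assms in \<open>auto simp: mg_spanning_tree_def\<close>)

lemma spanning_tree_exists:
  assumes conn: "mg_connected V E s t" and "N > 0"
    and Ntrees: "\<And>e. e \<in> E \<Longrightarrow> card {T. mg_spanning_tree V E s t T \<and> e \<notin> T} = N"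
  obtains T where "mg_spanning_tree V E s t T"
proof (cases "E = {}")
  case True
  then have "mg_spanning_tree V E s t {}" using conn unfolding mg_spanning_tree_def mg_cycle_def by auto
  then show ?thesis using that by blast
next
  case False
  then obtain e where "e \<in> E" by auto
  then have "card {T. mg_spanning_tree V E s t T \<and> e \<notin> T} > 0" using Ntrees \<open>N > 0\<close> by simp
  then have "{T. mg_spanning_tree V E s t T \<and> e \<notin> T} \<noteq> {}" by (metis card.empty less_irrefl)
  then show ?thesis using that by blast
qed

lemma dT_le_of_bool:
  assumes "e \<in> E" and y: "snd y = (snd x)(e := (snd x e + 1) mod int m)"
  shows "real (dT m E T x y) \<le> of_bool (e \<notin> T)"
proof (cases "e \<in> T")
  case True
  then have "cloud E T y = cloud E T x" unfolding cloud_def using y by (auto intro!: ext)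
  then have "dT m E T x y \<le> 0"
    using word_dist_le_length[of "[]" "E - T" m "cloud E T x" "cloud E T y"] unfolding dT_def by simp
  then show ?thesis by simp
next
  case False
  then have "cloud E T y = fold (apply_letter m) [(e, True)] (cloud E T x)"
    unfolding cloud_def apply_letter_def using y \<open>e \<in> E\<close> by (auto intro!: ext)
  then have "dT m E T x y \<le> length [(e, True)]"
    unfolding dT_def by (intro word_dist_le_length) (use False \<open>e \<in> E\<close> in auto)
  then show ?thesis using False by simp
qed

text \<open>Crossing the edge e moves the T-cloud only for the N trees avoiding e.\<close>
lemma dQ_le_1_across_edge:
  assumes fE: "finite E" and "e \<in> E" and y: "snd y = (snd x)(e := (snd x e + 1) mod int m)"
    and Ntrees: "card {T. mg_spanning_tree V E s t T \<and> e \<notin> T} = N"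
  shows "dQ m N V E s t x y \<le> 1"
proof -
  let ?TS = "{T. mg_spanning_tree V E s t T}"
  have "(\<Sum>T\<in>?TS. real (dT m E T x y)) \<le> (\<Sum>T\<in>?TS. of_bool (e \<notin> T))"
    by (rule sum_mono) (rule dT_le_of_bool[OF \<open>e \<in> E\<close> y])
  also have "\<dots> = real (card (?TS \<inter> {T. e \<notin> T}))" using finite_spanning_trees[OF fE, of V s t] by simp
  also have "?TS \<inter> {T. e \<notin> T} = {T. mg_spanning_tree V E s t T \<and> e \<notin> T}" by auto
  finally have "(\<Sum>T\<in>?TS. real (dT m E T x y)) \<le> real N" using Ntrees by simp
  then show ?thesis unfolding dQ_def by (cases "N = 0") (simp_all add: field_simps)
qed

lemma dQ_le_1_if_hc_adj:
  assumes fE: "finite E" and adj: "hc_adj m V E s t x y"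
    and Ntrees: "\<And>e. e \<in> E \<Longrightarrow> card {T. mg_spanning_tree V E s t T \<and> e \<notin> T} = N"
  shows "dQ m N V E s t x y \<le> 1 \<or> dQ m N V E s t y x \<le> 1"
proof -
  obtain e where "e \<in> E"
    "snd y = (snd x)(e := (snd x e + 1) mod int m) \<or> snd x = (snd y)(e := (snd y e + 1) mod int m)"
    using adj unfolding hc_adj_def by blast
  then show ?thesis using dQ_le_1_across_edge[OF fE _ _ Ntrees] by blast
qed

text \<open>Double counting: every edge of the difference support is missed by exactly N trees, and
  each tree T pays at least one generator per such edge outside T.\<close>
lemma dQ_ge_card_chain_diff:
  assumes "m > 0" and fE: "finite E" and "N > 0"
    and Ntrees: "\<And>e. e \<in> E \<Longrightarrow> card {T. mg_spanning_tree V E s t T \<and> e \<notin> T} = N"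
    and x: "(v, c) \<in> hc_verts m V E s t" and y: "(w, c') \<in> hc_verts m V E s t"
  shows "real (card (chain_diff E c c')) \<le> dQ m N V E s t (v, c) (w, c')"
proof -
  let ?TS = "{T. mg_spanning_tree V E s t T}" and ?S = "chain_diff E c c'"
  have fT: "finite ?TS" by (rule finite_spanning_trees[OF fE])
  have fS: "finite ?S" using fE by simp
  have range: "\<And>e. c e \<in> {0..<int m}" "\<And>e. c' e \<in> {0..<int m}" using x y unfolding hc_verts_iff by auto
  have per_tree: "(\<Sum>e\<in>?S. of_bool (e \<notin> T)) \<le> real (dT m E T (v, c) (w, c'))" for T
  proof -
    have "{e\<in>E - T. cloud E T (v, c) e \<noteq> cloud E T (w, c') e} = ?S \<inter> {e. e \<notin> T}"
      unfolding cloud_def by auto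
    moreover have "card {e\<in>E - T. cloud E T (v, c) e \<noteq> cloud E T (w, c') e} \<le> dT m E T (v, c) (w, c')"
      unfolding dT_def by (rule word_dist_ge_card_changes[OF \<open>m > 0\<close>]) (use fE range in \<open>auto simp: cloud_def\<close>)
    ultimately show ?thesis using fS by simp
  qed
  have "(\<Sum>T\<in>?TS. of_bool (e \<notin> T)) = real N" if "e \<in> E" for e
  proof -
    have "?TS \<inter> {T. e \<notin> T} = {T. mg_spanning_tree V E s t T \<and> e \<notin> T}" by auto
    then show ?thesis using fT Ntrees[OF that] by simp
  qed
  then have "real (card ?S) * real N = (\<Sum>e\<in>?S. \<Sum>T\<in>?TS. of_bool (e \<notin> T))" by simp
  also have "\<dots> = (\<Sum>T\<in>?TS. \<Sum>e\<in>?S. of_bool (e \<notin> T))" by (rule sum.swap)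
  also have "\<dots> \<le> (\<Sum>T\<in>?TS. real (dT m E T (v, c) (w, c')))" by (rule sum_mono) (rule per_tree)
  finally show ?thesis using \<open>N > 0\<close> unfolding dQ_def by (simp add: field_simps)
qed

section \<open>Comparison on a single component\<close>

lemma dist_le_relpowp:
  assumes metric: "metric_on S Q" and step: "\<And>x y. A x y \<Longrightarrow> x \<in> S \<and> y \<in> S \<and> Q x y \<le> 1"
  shows "(A ^^ k) x z \<Longrightarrow> x \<in> S \<Longrightarrow> z \<in> S \<Longrightarrow> Q x z \<le> real k"
proof (induction k arbitrary: x)
  case 0
  then have "Q x z = 0" using metric unfolding metric_on_def by simp
  then show ?case by simp
next
  case (Suc k)
  from Suc.prems(1) obtain y where y: "A x y" "(A ^^ k) y z" by (rule relpowp_Suc_E2)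
  then have "y \<in> S" "Q x y \<le> 1" using step[OF y(1)] by simp_all
  moreover have "Q y z \<le> real k" using Suc.IH[OF y(2) \<open>y \<in> S\<close> Suc.prems(3)] .
  moreover have "Q x z \<le> Q x y + Q y z" using metric \<open>y \<in> S\<close> Suc.prems(2,3) unfolding metric_on_def by blast
  ultimately show ?case by simp
qed

lemma graph_dist_refl: "graph_dist R x x = 0"
  unfolding graph_dist_def by simp

lemma graph_dist_le_relpowp: "(R ^^ k) x y \<Longrightarrow> graph_dist R x y \<le> real k"
  unfolding graph_dist_def by (simp add: Least_le)

lemma dQ_le_graph_dist:
  assumes m: "m \<ge> 2" and wf: "mg_wf V E s t" and conn: "mg_connected V E s t"
    and Ntrees: "\<And>e. e \<in> E \<Longrightarrow> card {T. mg_spanning_tree V E s t T \<and> e \<notin> T} = N"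
    and metric: "metric_on (hc_verts m V E s t) (dQ m N V E s t)"
    and x: "x \<in> hc_verts m V E s t" and y: "y \<in> hc_verts m V E s t"
  shows "dQ m N V E s t x y \<le> graph_dist (hc_adj m V E s t) x y"
proof (cases "N = 0")
  case True
  \<comment> \<open>the normalising factor is 1 / real 0 = 0\<close>
  then show ?thesis unfolding dQ_def graph_dist_def by simp
next
  case False
  have fE: "finite E" using wf unfolding mg_wf_def by auto
  obtain T where "mg_spanning_tree V E s t T"
    using spanning_tree_exists[OF conn _ Ntrees] False by blast
  from hc_connected[OF m wf this x y] obtain k where "(hc_adj m V E s t ^^ k) x y"
    by (metis rtranclp_power)
  then have shortest: "(hc_adj m V E s t ^^ (LEAST k. (hc_adj m V E s t ^^ k) x y)) x y" by (rule LeastI)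
  have step: "x' \<in> hc_verts m V E s t \<and> y' \<in> hc_verts m V E s t \<and> dQ m N V E s t x' y' \<le> 1"
    if "hc_adj m V E s t x' y'" for x' y'
  proof -
    have "x' \<in> hc_verts m V E s t" "y' \<in> hc_verts m V E s t" using that unfolding hc_adj_def by auto
    moreover from this have "dQ m N V E s t x' y' = dQ m N V E s t y' x'"
      using metric unfolding metric_on_def by blast
    ultimately show ?thesis using dQ_le_1_if_hc_adj[OF fE that Ntrees] by auto
  qed
  show ?thesis
    using dist_le_relpowp[OF metric step shortest x y] unfolding graph_dist_def .
qed

lemma acyclic_if_card_lt_girth:
  assumes "finite F" "F \<subseteq> E" "enat (card F) < mg_girth E s t"
  shows "\<not> (\<exists>es vs. mg_cycle F s t es vs)"
proof
  assume "\<exists>es vs. mg_cycle F s t es vs"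
  then obtain es vs where cycle: "mg_cycle F s t es vs" by blast
  have "distinct es" "set es \<subseteq> F" using cycle unfolding mg_cycle_def by auto
  then have len: "length es \<le> card F" using assms(1) card_mono distinct_card by metis
  have "mg_girth E s t \<le> enat (length es)"
    unfolding mg_girth_def using mg_cycle_mono[OF cycle assms(2)] by (blast intro: INF_lower)
  also have "\<dots> \<le> enat (card F)" using len by simp
  also have "\<dots> < mg_girth E s t" by fact
  finally show False by simp
qed

text \<open>Below the girth the difference support is a forest, which a walk of its size crosses.\<close>
lemma graph_dist_le_dQ:
  assumes m: "m \<ge> 2" and wf: "mg_wf V E s t"
    and Ntrees: "\<And>e. e \<in> E \<Longrightarrow> card {T. mg_spanning_tree V E s t T \<and> e \<notin> T} = N"
    and metric: "metric_on (hc_verts m V E s t) (dQ m N V E s t)"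
    and girth: "enat L < mg_girth E s t"
    and x: "x \<in> hc_verts m V E s t" and y: "y \<in> hc_verts m V E s t"
    and small: "dQ m N V E s t x y \<le> real L"
  shows "graph_dist (hc_adj m V E s t) x y \<le> dQ m N V E s t x y"
proof (cases "N = 0")
  case True
  then have "dQ m N V E s t x y = 0" unfolding dQ_def by simp
  moreover from this have "x = y" using metric x y unfolding metric_on_def by blast
  ultimately show ?thesis by (simp add: graph_dist_refl)
next
  case False
  have fE: "finite E" using wf unfolding mg_wf_def by auto
  obtain v c w c' where xy: "x = (v, c)" "y = (w, c')" by (cases x, cases y)
  let ?S = "chain_diff E c c'"
  have le: "real (card ?S) \<le> dQ m N V E s t x y"
    using dQ_ge_card_chain_diff[OF _ fE _ Ntrees] x y m False xy by simp
  then have "card ?S \<le> L" using small by linarith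
  then have "enat (card ?S) \<le> enat L" by simp
  also note girth
  finally have "enat (card ?S) < mg_girth E s t" .
  then have "\<not> (\<exists>es vs. mg_cycle ?S s t es vs)" using fE by (intro acyclic_if_card_lt_girth) auto
  then have "(hc_adj m V E s t ^^ card ?S) x y"
    using hc_relpowp_card_chain_diff[OF m wf] x y xy by simp
  from graph_dist_le_relpowp[OF this] le show ?thesis by simp
qed

section \<open>Coarse disjoint unions\<close>

lemma metric_on_disj_union:
  "coarse_disj_union_metric X dn d \<Longrightarrow> metric_on (disj_union X) d"
  unfolding coarse_disj_union_metric_def by (rule conjunct1)

lemma coarse_disj_union_metric_restrict:
  assumes "coarse_disj_union_metric X dn d" "x \<in> X n" "y \<in> X n"
  shows "d (n, x) (n, y) = dn n x y"
  using conjunct1[OF conjunct2[OF assms(1)[unfolded coarse_disj_union_metric_def]]] assms(2,3) by blast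

lemma coarse_disj_union_metric_far:
  fixes R :: real
  assumes "coarse_disj_union_metric X dn d"
  obtains N where "\<And>n n' x y. n \<noteq> n' \<Longrightarrow> N \<le> n \<or> N \<le> n' \<Longrightarrow> x \<in> X n \<Longrightarrow> y \<in> X n' \<Longrightarrow> R \<le> d (n, x) (n', y)"
  using conjunct2[OF conjunct2[OF conjunct2[OF assms[unfolded coarse_disj_union_metric_def]]]] by meson

lemma metric_on_component:
  assumes "coarse_disj_union_metric X dn d"
  shows "metric_on (X n) (dn n)"
proof -
  have mem: "\<And>x. x \<in> X n \<Longrightarrow> (n, x) \<in> disj_union X" unfolding disj_union_def by simp
  have A: "\<forall>x\<in>disj_union X. \<forall>y\<in>disj_union X. 0 \<le> d x y \<and> d x y = d y x \<and> (d x y = 0 \<longleftrightarrow> x = y)"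
    and B: "\<forall>x\<in>disj_union X. \<forall>y\<in>disj_union X. \<forall>z\<in>disj_union X. d x z \<le> d x y + d y z"
    using metric_on_disj_union[OF assms] unfolding metric_on_def by blast+
  have "0 \<le> dn n x y \<and> dn n x y = dn n y x \<and> (dn n x y = 0 \<longleftrightarrow> x = y)" if "x \<in> X n" "y \<in> X n" for x y
    using A[rule_format, OF mem[OF that(1)] mem[OF that(2)]] coarse_disj_union_metric_restrict[OF assms] that by auto
  moreover have "dn n x z \<le> dn n x y + dn n y z" if "x \<in> X n" "y \<in> X n" "z \<in> X n" for x y z
    using B[rule_format, OF mem[OF that(1)] mem[OF that(2)] mem[OF that(3)]] coarse_disj_union_metric_restrict[OF assms] that by auto
  ultimately show ?thesis unfolding metric_on_def by blast
qed

lemma coarse_disj_union_metric_nonneg: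
  assumes "coarse_disj_union_metric X dn d" "p \<in> disj_union X" "q \<in> disj_union X"
  shows "0 \<le> d p q"
  using metric_on_disj_union[OF assms(1)] assms(2,3) unfolding metric_on_def by blast

lemma bounded_on_finite:
  fixes f :: "'a \<Rightarrow> 'a \<Rightarrow> real"
  assumes "finite F"
  obtains B where "\<And>p q. p \<in> F \<Longrightarrow> q \<in> F \<Longrightarrow> f p q \<le> B"
proof
  fix p q assume "p \<in> F" "q \<in> F"
  then show "f p q \<le> Max ((\<lambda>(p, q). f p q) ` (F \<times> F))"
    using assms by (intro Max_ge) auto
qed

text \<open>A bound on the components from some index on suffices: the remaining finitely many
  components are finite, and distinct components drift apart.\<close>
lemma coarse_disj_union_bounded:
  assumes fin: "\<And>n. finite (X n)"
    and d1: "coarse_disj_union_metric X dn1 d1" and d2: "coarse_disj_union_metric X dn2 d2"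
    and B: "\<And>n x y. n \<ge> n0 \<Longrightarrow> x \<in> X n \<Longrightarrow> y \<in> X n \<Longrightarrow> dn1 n x y \<le> R \<Longrightarrow> dn2 n x y \<le> B"
  shows "\<exists>B'. \<forall>p\<in>disj_union X. \<forall>q\<in>disj_union X. d1 p q \<le> R \<longrightarrow> d2 p q \<le> B'"
proof -
  obtain N0 where far: "\<And>n n' x y. n \<noteq> n' \<Longrightarrow> N0 \<le> n \<or> N0 \<le> n' \<Longrightarrow> x \<in> X n \<Longrightarrow> y \<in> X n' \<Longrightarrow>
      R + 1 \<le> d1 (n, x) (n', y)"
    using coarse_disj_union_metric_far[OF d1, where R = "R + 1"] by blast
  note restr1 = coarse_disj_union_metric_restrict[OF d1] and restr2 = coarse_disj_union_metric_restrict[OF d2]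
  define M where "M = max n0 N0"
  have "finite (SIGMA n:{..<M}. X n)" using fin by auto
  then obtain B0 where B0: "\<And>p q. p \<in> (SIGMA n:{..<M}. X n) \<Longrightarrow> q \<in> (SIGMA n:{..<M}. X n) \<Longrightarrow> d2 p q \<le> B0"
    using bounded_on_finite[where f = d2] by blast
  have "d2 (n, x) (n', y) \<le> max B B0" if x: "x \<in> X n" and y: "y \<in> X n'" and le: "d1 (n, x) (n', y) \<le> R"
    for n n' x y
  proof (cases "n = n' \<and> n0 \<le> n")
    case True
    then show ?thesis using B[of n x y] restr1 restr2 x y le by simp
  next
    case False
    have "n < M \<and> n' < M"
    proof (cases "n = n'")
      case True
      then show ?thesis using False unfolding M_def by auto
    next
      case False
      then have "n < N0 \<and> n' < N0" using far[of n n' x y] x y le by force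
      then show ?thesis unfolding M_def by auto
    qed
    then show ?thesis using B0[of "(n, x)" "(n', y)"] x y by simp
  qed
  then show ?thesis unfolding disj_union_def by fast
qed

lemma mono_majorant:
  fixes f :: "nat \<Rightarrow> real"
  obtains g where "mono g" "\<And>k. f k \<le> g k" "\<And>k. real k \<le> g k"
proof
  let ?g = "\<lambda>k. real k + (\<Sum>i\<le>k. \<bar>f i\<bar>)"
  show "mono ?g"
    by (intro monoI add_mono sum_mono2) auto
  show "f k \<le> ?g k" "real k \<le> ?g k" for k
    using member_le_sum[of k "{..k}" "\<lambda>i. \<bar>f i\<bar>"] sum_nonneg[of "{..k}" "\<lambda>i. \<bar>f i\<bar>"] by auto
qed

lemma upper_control_function:
  fixes d1 d2 :: "'a \<Rightarrow> 'a \<Rightarrow> real"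
  assumes bounded: "\<And>R. \<exists>B. \<forall>p\<in>U. \<forall>q\<in>U. d1 p q \<le> R \<longrightarrow> d2 p q \<le> B"
  obtains \<rho> where "mono \<rho>" "filterlim \<rho> at_top at_top" "\<And>p q. p \<in> U \<Longrightarrow> q \<in> U \<Longrightarrow> d2 p q \<le> \<rho> (d1 p q)"
proof -
  obtain f where f: "\<And>R p q. p \<in> U \<Longrightarrow> q \<in> U \<Longrightarrow> d1 p q \<le> R \<Longrightarrow> d2 p q \<le> f R"
    using bounded by metis
  obtain g where g: "mono g" "\<And>k. f (real k) \<le> g k" "\<And>k. real k \<le> g k"
    using mono_majorant[of "\<lambda>k. f (real k)"] by blast
  define \<rho> where "\<rho> r = g (nat \<lceil>r\<rceil>)" for r :: real
  show ?thesis
  proof (rule that)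
    show "mono \<rho>" unfolding \<rho>_def by (intro monoI monoD[OF g(1)] nat_mono ceiling_mono)
    have "r \<le> \<rho> r" for r using g(3)[of "nat \<lceil>r\<rceil>"] unfolding \<rho>_def by linarith
    then show "filterlim \<rho> at_top at_top"
      by (intro filterlim_at_top_mono[OF filterlim_ident]) auto
    fix p q assume "p \<in> U" "q \<in> U"
    moreover have "d1 p q \<le> real (nat \<lceil>d1 p q\<rceil>)" by (rule real_nat_ceiling_ge)
    ultimately show "d2 p q \<le> \<rho> (d1 p q)" unfolding \<rho>_def using f g(2) order_trans by blast
  qed
qed

text \<open>The lower control function is a generalised inverse of a monotone majorant g of the
  bound: \<rho> r + 1 is the least k with r \<le> g k.\<close>
lemma lower_control_function:
  fixes d1 d2 :: "'a \<Rightarrow> 'a \<Rightarrow> real"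
  assumes nonneg: "\<And>p q. p \<in> U \<Longrightarrow> q \<in> U \<Longrightarrow> 0 \<le> d2 p q"
    and bounded: "\<And>R. \<exists>B. \<forall>p\<in>U. \<forall>q\<in>U. d2 p q \<le> R \<longrightarrow> d1 p q \<le> B"
  obtains \<rho> where "mono \<rho>" "filterlim \<rho> at_top at_top" "\<And>p q. p \<in> U \<Longrightarrow> q \<in> U \<Longrightarrow> \<rho> (d1 p q) \<le> d2 p q"
proof -
  obtain f where f: "\<And>R p q. p \<in> U \<Longrightarrow> q \<in> U \<Longrightarrow> d2 p q \<le> R \<Longrightarrow> d1 p q \<le> f R"
    using bounded by metis
  obtain g where g: "mono g" "\<And>k. f (real k) \<le> g k" "\<And>k. real k \<le> g k"
    using mono_majorant[of "\<lambda>k. f (real k)"] by blast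
  define \<kappa> where "\<kappa> r = (LEAST k. r \<le> g k)" for r :: real
  have \<kappa>: "r \<le> g (\<kappa> r)" for r
    unfolding \<kappa>_def by (rule LeastI[of _ "nat \<lceil>r\<rceil>"]) (use g(3)[of "nat \<lceil>r\<rceil>"] in linarith)
  have \<kappa>_least: "k < \<kappa> r \<Longrightarrow> g k < r" for k r
    unfolding \<kappa>_def using not_less_Least by force
  define \<rho> where "\<rho> r = real (\<kappa> r) - 1" for r :: real
  show ?thesis
  proof (rule that)
    have "\<kappa> r \<le> \<kappa> r'" if "r \<le> r'" for r r'
      unfolding \<kappa>_def[of r] using \<kappa>[of r'] that by (intro Least_le) simp
    then show "mono \<rho>" unfolding \<rho>_def by (intro monoI) simp
    have "Z \<le> \<rho> r" if "g (nat \<lceil>Z\<rceil> + 1) < r" for Z r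
    proof -
      have "\<not> \<kappa> r \<le> nat \<lceil>Z\<rceil> + 1" using \<kappa>[of r] monoD[OF g(1)] that by (meson le_less_trans not_le)
      then show ?thesis unfolding \<rho>_def by linarith
    qed
    then show "filterlim \<rho> at_top at_top"
      unfolding filterlim_at_top eventually_at_top_dense by blast
    fix p q assume p: "p \<in> U" and q: "q \<in> U"
    show "\<rho> (d1 p q) \<le> d2 p q"
    proof (cases "\<kappa> (d1 p q) = 0")
      case True
      then show ?thesis unfolding \<rho>_def using nonneg[OF p q] by simp
    next
      case False
      then have "g (\<kappa> (d1 p q) - 1) < d1 p q" by (intro \<kappa>_least) simp
      then have "\<not> d2 p q \<le> real (\<kappa> (d1 p q) - 1)" using f[OF p q] g(2) by (meson not_le order_trans)
      then show ?thesis unfolding \<rho>_def using False by simp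
    qed
  qed
qed

lemma coarse_embedding_idI:
  fixes d1 d2 :: "'a \<Rightarrow> 'a \<Rightarrow> real"
  assumes "\<And>p q. p \<in> U \<Longrightarrow> q \<in> U \<Longrightarrow> 0 \<le> d2 p q"
    and "\<And>R. \<exists>B. \<forall>p\<in>U. \<forall>q\<in>U. d1 p q \<le> R \<longrightarrow> d2 p q \<le> B"
    and "\<And>R. \<exists>B. \<forall>p\<in>U. \<forall>q\<in>U. d2 p q \<le> R \<longrightarrow> d1 p q \<le> B"
  shows "coarse_embedding U d1 d2 id"
proof -
  obtain \<rho>p where "mono \<rho>p" "filterlim \<rho>p at_top at_top" "\<And>p q. p \<in> U \<Longrightarrow> q \<in> U \<Longrightarrow> d2 p q \<le> \<rho>p (d1 p q)"
    using upper_control_function[OF assms(2)] by blast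
  moreover obtain \<rho>m where "mono \<rho>m" "filterlim \<rho>m at_top at_top" "\<And>p q. p \<in> U \<Longrightarrow> q \<in> U \<Longrightarrow> \<rho>m (d1 p q) \<le> d2 p q"
    using lower_control_function[OF assms(1,3)] by blast
  ultimately show ?thesis unfolding coarse_embedding_def id_apply by blast
qed

theorem mainTheorem6:
  fixes m :: nat
    and V :: "nat \<Rightarrow> 'v set" and E :: "nat \<Rightarrow> 'e set"
    and s t :: "nat \<Rightarrow> 'e \<Rightarrow> 'v"
    and N :: "nat \<Rightarrow> nat"
    and d dQd :: "nat \<times> ('v \<times> ('e \<Rightarrow> int)) \<Rightarrow> nat \<times> ('v \<times> ('e \<Rightarrow> int)) \<Rightarrow> real"
  assumes m: "m \<ge> 3"
    and wf: "\<And>n. mg_wf (V n) (E n) (s n) (t n)"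
    and conn: "\<And>n. mg_connected (V n) (E n) (s n) (t n)"
    and conn2: "\<And>n. mg_2connected (V n) (E n) (s n) (t n)"
    and Ntrees: "\<And>n e. e \<in> E n \<Longrightarrow>
        card {T. mg_spanning_tree (V n) (E n) (s n) (t n) T \<and> e \<notin> T} = N n"
    and girth: "\<And>L::nat. \<exists>n0. \<forall>n\<ge>n0. enat L < mg_girth (E n) (s n) (t n)"
    and d: "coarse_disj_union_metric (\<lambda>n. hc_verts m (V n) (E n) (s n) (t n))
              (\<lambda>n. graph_dist (hc_adj m (V n) (E n) (s n) (t n))) d"
    and dQd: "coarse_disj_union_metric (\<lambda>n. hc_verts m (V n) (E n) (s n) (t n))
              (\<lambda>n. dQ m (N n) (V n) (E n) (s n) (t n)) dQd"
  shows "coarse_embedding (disj_union (\<lambda>n. hc_verts m (V n) (E n) (s n) (t n))) d dQd id \<and>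
         coarse_embedding (disj_union (\<lambda>n. hc_verts m (V n) (E n) (s n) (t n))) dQd d id"
proof -
  let ?X = "\<lambda>n. hc_verts m (V n) (E n) (s n) (t n)"
  have m2: "m \<ge> 2" using m by simp
  have fin: "finite (?X n)" for n using finite_hc_verts[OF wf] .
  have Qmetric: "metric_on (?X n) (dQ m (N n) (V n) (E n) (s n) (t n))" for n
    using metric_on_component[OF dQd] .
  have d_dQd: "\<exists>B. \<forall>p\<in>disj_union ?X. \<forall>q\<in>disj_union ?X. d p q \<le> R \<longrightarrow> dQd p q \<le> B" for R
    by (rule coarse_disj_union_bounded[OF fin d dQd, of 0])
      (use dQ_le_graph_dist[OF m2 wf conn Ntrees Qmetric] in \<open>blast intro: order_trans\<close>)
  have dQd_d: "\<exists>B. \<forall>p\<in>disj_union ?X. \<forall>q\<in>disj_union ?X. dQd p q \<le> R \<longrightarrow> d p q \<le> B" for R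
  proof -
    obtain n0 where n0: "\<forall>n\<ge>n0. enat (nat \<lceil>R\<rceil>) < mg_girth (E n) (s n) (t n)"
      using girth by blast
    have "R \<le> real (nat \<lceil>R\<rceil>)" by (rule real_nat_ceiling_ge)
    then show ?thesis
      by (intro coarse_disj_union_bounded[OF fin dQd d, of n0])
        (use graph_dist_le_dQ[OF m2 wf Ntrees Qmetric] n0 in \<open>blast intro: order_trans\<close>)
  qed
  show ?thesis
    using coarse_embedding_idI[OF coarse_disj_union_metric_nonneg[OF dQd] d_dQd dQd_d]
      coarse_embedding_idI[OF coarse_disj_union_metric_nonneg[OF d] dQd_d d_dQd] by blast
qed

end
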